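(* Let $M$ be a loopless matroid on a finite nonempty ground set $E$ with density $\rho=|E|/\operatorname{rank}(E)$. The following are equivalent: (1) the base polytope $P(M)$ contains the point $(\rho^{-1},\dots,\rho^{-1})$ in its relative interior; (2) $\rho(A)\le\rho(E)$ for all nonempty $A\subseteq E$, with strict inequality whenever $A$ is not a union of ground sets of connected components of $M$; (3) there exists a measure $\mu$ on the bases with $\mu(B)>0$ for every basis $B$ such that $\mu(\{B: B\ni e\})$ is the same for all $e\in E$.
   Context: $\operatorname{rank}(A)=\max_B|A\cap B|$ over bases $B$; $\rho(A)=|A|/\operatorname{rank}(A)$. $P(M)$ is the convex hull of the $0$–$1$ indicator vectors of bases. The direct sum of matroids on disjoint ground sets has as bases the unions of one basis from each. A matroid is connected if it is not a direct sum of two matroids on nonempty ground sets; every matroid decomposes uniquely as $M=\bigoplus_{i=1}^\ell M_i$ with each $M_i$ connected on $E_i$, $E=E_1\sqcup\dots\sqcup E_\ell$; these $M_i$ are the connected components. A matroid satisfying these conditions is called strictly uniformly dense. *)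

theory Defs
  imports "HOL-Analysis.Analysis"
begin

definition matroid :: "'a set \<Rightarrow> 'a set set \<Rightarrow> bool" where
  "matroid E \<B> \<longleftrightarrow> finite E \<and> \<B> \<noteq> {} \<and> (\<forall>B\<in>\<B>. B \<subseteq> E) \<and>
     (\<forall>B1\<in>\<B>. \<forall>B2\<in>\<B>. \<forall>x\<in>B1 - B2. \<exists>y\<in>B2 - B1. insert y (B1 - {x}) \<in> \<B>)"

definition loopless :: "'a set \<Rightarrow> 'a set set \<Rightarrow> bool" where
  "loopless E \<B> \<longleftrightarrow> (\<forall>e\<in>E. \<exists>B\<in>\<B>. e \<in> B)"

definition mrank :: "'a set set \<Rightarrow> 'a set \<Rightarrow> nat" where
  "mrank \<B> A = Max ((\<lambda>B. card (A \<inter> B)) ` \<B>)"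

definition density :: "'a set set \<Rightarrow> 'a set \<Rightarrow> real" where
  "density \<B> A = real (card A) / real (mrank \<B> A)"

definition is_direct_sum :: "'a set \<Rightarrow> 'a set set \<Rightarrow> 'a set \<Rightarrow> 'a set set \<Rightarrow> 'a set \<Rightarrow> 'a set set \<Rightarrow> bool" where
  "is_direct_sum E \<B> S \<B>1 T \<B>2 \<longleftrightarrow> matroid S \<B>1 \<and> matroid T \<B>2 \<and> S \<inter> T = {} \<and> S \<union> T = E \<and>
     \<B> = {B1 \<union> B2 | B1 B2. B1 \<in> \<B>1 \<and> B2 \<in> \<B>2}"

definition connected_matroid :: "'a set \<Rightarrow> 'a set set \<Rightarrow> bool" where
  "connected_matroid E \<B> \<longleftrightarrow> matroid E \<B> \<and>
     \<not> (\<exists>S \<B>1 T \<B>2. S \<noteq> {} \<and> T \<noteq> {} \<and> is_direct_sum E \<B> S \<B>1 T \<B>2)"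

definition component_decomposition :: "'a set \<Rightarrow> 'a set set \<Rightarrow> ('a set \<times> 'a set set) set \<Rightarrow> bool" where
  "component_decomposition E \<B> \<C> \<longleftrightarrow> finite \<C> \<and>
     (\<forall>c\<in>\<C>. fst c \<noteq> {} \<and> connected_matroid (fst c) (snd c)) \<and>
     (\<forall>c\<in>\<C>. \<forall>d\<in>\<C>. c \<noteq> d \<longrightarrow> fst c \<inter> fst d = {}) \<and>
     \<Union> (fst ` \<C>) = E \<and>
     \<B> = {\<Union> (f ` \<C>) | f. \<forall>c\<in>\<C>. f c \<in> snd c}"

text \<open>A is a union of ground sets of connected components of (E,\<B>).
  (The decomposition into connected components is unique.)\<close>
definition union_of_components :: "'a set \<Rightarrow> 'a set set \<Rightarrow> 'a set \<Rightarrow> bool" where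
  "union_of_components E \<B> A \<longleftrightarrow>
     (\<exists>\<C>. component_decomposition E \<B> \<C> \<and> (\<exists>\<D>\<subseteq>\<C>. A = \<Union> (fst ` \<D>)))"

definition base_polytope :: "'e::finite set set \<Rightarrow> (real ^ 'e) set" where
  "base_polytope \<B> = convex hull ((\<lambda>B. \<chi> e. if e \<in> B then 1 else 0) ` \<B>)"

end

theory Submission
  imports Defs
begin

(* (1) and (3) say the same thing: the relative interior of the convex hull of finitely many
   points consists of their convex combinations with strictly positive weights, and if a measure
   mu has constant marginals c and total mass M, counting the pairs (e, B) with e in B gives
   |E| c = rank(E) M, so mu / M has all marginals equal to rank(E) / |E| = 1 / rho.

   (3) implies (2) by counting the same pairs with e in A: |A| c is the sum of |A \<inter> B| mu(B),
   which is at most rank(A) M, with equality only if every basis meets A in rank(A) elements.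
   Such an A is a separator: the bases split as a direct sum along A and its complement, so A is
   a union of connected components.

   (2) implies (1): by Edmonds' description of the base polytope (separating hyperplane plus the
   greedy algorithm) a point lies in P(M) as soon as it satisfies the rank inequalities. The
   segment from any vertex through the barycenter can be extended slightly beyond the barycenter
   without violating them: unions of components are tight at every vertex, and every other rank
   inequality holds at the barycenter with a slack of at least 1/|E|. A point z such that every
   segment from a vertex through z extends beyond z inside the polytope lies in its relative
   interior. *)

lemma matroid_finite: "matroid E \<B> \<Longrightarrow> finite E"
  by (simp add: matroid_def)

lemma matroid_basis_subset: "matroid E \<B> \<Longrightarrow> B \<in> \<B> \<Longrightarrow> B \<subseteq> E"
  by (simp add: matroid_def)

lemma matroid_finite_basis: "matroid E \<B> \<Longrightarrow> B \<in> \<B> \<Longrightarrow> finite B"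
  by (meson matroid_basis_subset matroid_finite finite_subset)

lemma matroid_finite_bases: "matroid E \<B> \<Longrightarrow> finite \<B>"
  by (meson Pow_iff finite_Pow_iff matroid_basis_subset matroid_finite finite_subset subsetI)

lemma matroid_bases_nonempty: "matroid E \<B> \<Longrightarrow> \<B> \<noteq> {}"
  by (simp add: matroid_def)

lemma matroid_exchange:
  "matroid E \<B> \<Longrightarrow> B1 \<in> \<B> \<Longrightarrow> B2 \<in> \<B> \<Longrightarrow> x \<in> B1 - B2 \<Longrightarrow>
    \<exists>y\<in>B2 - B1. insert y (B1 - {x}) \<in> \<B>"
  unfolding matroid_def by blast

lemma bases_card_eq:
  assumes m: "matroid E \<B>" and "B1 \<in> \<B>" "B2 \<in> \<B>"
  shows "card B1 = card B2"
  using assms(2)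
proof (induction "card (B1 - B2)" arbitrary: B1)
  case 0
  then have "B1 \<subseteq> B2"
    using matroid_finite_basis[OF m] by auto
  moreover have "B2 \<subseteq> B1"
    using matroid_exchange[OF m \<open>B2 \<in> \<B>\<close> \<open>B1 \<in> \<B>\<close>] \<open>B1 \<subseteq> B2\<close> by blast
  ultimately show ?case by simp
next
  case (Suc k)
  then obtain x where x: "x \<in> B1 - B2"
    by (metis card.empty empty_iff nat.distinct(1) subsetI subset_antisym)
  obtain y where y: "y \<in> B2 - B1" and B1': "insert y (B1 - {x}) \<in> \<B>"
    using matroid_exchange[OF m \<open>B1 \<in> \<B>\<close> \<open>B2 \<in> \<B>\<close> x] by blast
  have fin: "finite B1"
    using matroid_finite_basis[OF m \<open>B1 \<in> \<B>\<close>] .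
  have "insert y (B1 - {x}) - B2 = (B1 - B2) - {x}"
    using y by auto
  then have "card (insert y (B1 - {x}) - B2) = k"
    using Suc.hyps(2) x fin by simp
  then have "card (insert y (B1 - {x})) = card B2"
    using Suc.hyps(1) B1' by blast
  moreover have "card (insert y (B1 - {x})) = card B1"
    using x y fin by (metis DiffD1 DiffD2 card_Suc_Diff1 card_insert_disjoint finite_Diff insert_Diff)
  ultimately show ?case by simp
qed

lemma card_inter_le_mrank: "matroid E \<B> \<Longrightarrow> B \<in> \<B> \<Longrightarrow> card (A \<inter> B) \<le> mrank \<B> A"
  unfolding mrank_def by (simp add: matroid_finite_bases)

lemma mrank_attained: "matroid E \<B> \<Longrightarrow> \<exists>B\<in>\<B>. card (A \<inter> B) = mrank \<B> A"
  unfolding mrank_def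
  by (metis (mono_tags, lifting) Max_in finite_imageI image_iff image_is_empty
      matroid_bases_nonempty matroid_finite_bases)

lemma mrank_empty: "matroid E \<B> \<Longrightarrow> mrank \<B> {} = 0"
  by (metis Int_empty_left card.empty mrank_attained)

lemma mrank_insert_le: "matroid E \<B> \<Longrightarrow> mrank \<B> (insert e A) \<le> Suc (mrank \<B> A)"
proof -
  assume m: "matroid E \<B>"
  obtain B where B: "B \<in> \<B>" "card (insert e A \<inter> B) = mrank \<B> (insert e A)"
    using mrank_attained[OF m] by blast
  have "card (insert e A \<inter> B) \<le> card (insert e (A \<inter> B))"
    using matroid_finite_basis[OF m B(1)] by (intro card_mono) auto
  also have "\<dots> \<le> Suc (card (A \<inter> B))"
    by (simp add: card_insert_le_m1)
  also have "\<dots> \<le> Suc (mrank \<B> A)"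
    using card_inter_le_mrank[OF m B(1)] by simp
  finally show ?thesis
    using B(2) by simp
qed

text \<open>Independent sets are encoded as subsets of bases. A basis B \<supseteq> I meeting BJ maximally
  lies inside I \<union> BJ by exchange, and meets J only inside I unless I can be augmented;
  hence card B - card I \<le> card BJ - card J.\<close>
lemma independent_augment:
  assumes m: "matroid E \<B>" and I: "I \<subseteq> BI" "BI \<in> \<B>" and J: "J \<subseteq> BJ" "BJ \<in> \<B>"
    and less: "card I < card J"
  shows "\<exists>x\<in>J - I. \<exists>B\<in>\<B>. insert x I \<subseteq> B"
proof (rule ccontr)
  assume no_aug: "\<not> ?thesis"
  have finJ: "finite BJ"
    using matroid_finite_basis[OF m J(2)] .
  obtain B where B: "B \<in> \<B>" "I \<subseteq> B"
    and max: "\<And>B'. B' \<in> \<B> \<Longrightarrow> I \<subseteq> B' \<Longrightarrow> card (B' \<inter> BJ) \<le> card (B \<inter> BJ)"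
    using ex_has_greatest_nat[of "\<lambda>B. B \<in> \<B> \<and> I \<subseteq> B" BI "\<lambda>B. card (B \<inter> BJ)" "Suc (card BJ)"]
      I finJ by (metis Int_lower2 card_mono le_imp_less_Suc)
  have finB: "finite B"
    using matroid_finite_basis[OF m B(1)] .
  have "B - I \<subseteq> BJ"
  proof
    fix x assume x: "x \<in> B - I"
    show "x \<in> BJ"
    proof (rule ccontr)
      assume "x \<notin> BJ"
      then obtain y where y: "y \<in> BJ - B" and B': "insert y (B - {x}) \<in> \<B>"
        using matroid_exchange[OF m B(1) J(2)] x by blast
      have "insert y (B - {x}) \<inter> BJ = insert y (B \<inter> BJ)"
        using y \<open>x \<notin> BJ\<close> by auto
      then have "card (insert y (B - {x}) \<inter> BJ) = Suc (card (B \<inter> BJ))"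
        using y finB by simp
      then show False
        using max[OF B'] B(2) x by fastforce
    qed
  qed
  moreover have "B \<inter> J \<subseteq> I"
    using no_aug B by blast
  ultimately have "B - I \<subseteq> BJ - J"
    by blast
  then have "card (B - I) \<le> card (BJ - J)"
    using finJ by (simp add: card_mono)
  moreover have "card (B - I) = card B - card I" "card (BJ - J) = card BJ - card J"
    using B(2) J(1) finB finJ by (simp_all add: card_Diff_subset finite_subset)
  moreover have "card J \<le> card BJ"
    using J(1) finJ by (simp add: card_mono)
  ultimately show False
    using less bases_card_eq[OF m B(1) J(2)] by linarith
qed

lemma basis_attaining_mrank_insert:
  assumes m: "matroid E \<B>" and B: "B \<in> \<B>" "card (S \<inter> B) = mrank \<B> S"
  shows "\<exists>B'\<in>\<B>. S \<inter> B \<subseteq> B' \<and> card (insert e S \<inter> B') = mrank \<B> (insert e S)"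
proof (cases "card (insert e S \<inter> B) = mrank \<B> (insert e S)")
  case True
  then show ?thesis
    using B(1) by blast
next
  case False
  define I where "I = S \<inter> B"
  have finB: "finite B"
    using matroid_finite_basis[OF m B(1)] .
  obtain B2 where B2: "B2 \<in> \<B>" "card (insert e S \<inter> B2) = mrank \<B> (insert e S)"
    using mrank_attained[OF m] by blast
  have "card I \<le> card (insert e S \<inter> B)"
    unfolding I_def using finB by (intro card_mono) auto
  then have "card I < card (insert e S \<inter> B2)"
    using False B2(2) card_inter_le_mrank[OF m B(1)] le_neq_implies_less by fastforce
  then obtain x B' where x: "x \<in> insert e S \<inter> B2 - I" and B': "B' \<in> \<B>" "insert x I \<subseteq> B'"
    using independent_augment[OF m _ B(1) _ B2(1)] I_def by blast
  have finB': "finite B'"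
    using matroid_finite_basis[OF m B'(1)] .
  have card_insert_I: "card (insert x I) = Suc (mrank \<B> S)"
    using x finB B(2) I_def by simp
  have "x \<notin> S"
  proof
    assume "x \<in> S"
    then have "card (insert x I) \<le> card (S \<inter> B')"
      using B' finB' I_def by (intro card_mono) auto
    then show False
      using card_inter_le_mrank[OF m B'(1), of S] card_insert_I by simp
  qed
  then have "card (insert x I) \<le> card (insert e S \<inter> B')"
    using x B' finB' I_def by (intro card_mono) auto
  then have "card (insert e S \<inter> B') = mrank \<B> (insert e S)"
    using card_insert_I mrank_insert_le[OF m, of e S] card_inter_le_mrank[OF m B'(1)]
    by (metis le_antisym order.trans)
  then show ?thesis
    using B' I_def by blast
qed

lemma basis_attaining_prefix_ranks:
  assumes m: "matroid E \<B>"
  shows "\<exists>B\<in>\<B>. \<forall>j. card (set (take j es) \<inter> B) = mrank \<B> (set (take j es))"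
proof (induction es rule: rev_induct)
  case Nil
  then show ?case
    using matroid_bases_nonempty[OF m] mrank_empty[OF m] by auto
next
  case (snoc e xs)
  obtain B where B: "B \<in> \<B>" and B_pref: "\<And>j. card (set (take j xs) \<inter> B) = mrank \<B> (set (take j xs))"
    using snoc.IH by blast
  obtain B' where B': "B' \<in> \<B>" "set xs \<inter> B \<subseteq> B'"
    and B'_last: "card (insert e (set xs) \<inter> B') = mrank \<B> (insert e (set xs))"
    using basis_attaining_mrank_insert[OF m B, of "set xs" e] B_pref[of "length xs"] by auto
  have B'_pref: "card (set (take j xs) \<inter> B') = mrank \<B> (set (take j xs))" for j
  proof -
    have "set (take j xs) \<inter> B \<subseteq> set (take j xs) \<inter> B'"
      using B'(2) set_take_subset by fastforce
    then have "card (set (take j xs) \<inter> B) \<le> card (set (take j xs) \<inter> B')"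
      using matroid_finite_basis[OF m B'(1)] by (simp add: card_mono)
    then show ?thesis
      using B_pref card_inter_le_mrank[OF m B'(1)] by (metis le_antisym)
  qed
  have "take j (xs @ [e]) = take j xs \<or> take j (xs @ [e]) = xs @ [e]" for j
    by (cases "j \<le> length xs") auto
  then show ?case
    using B'(1) B'_pref B'_last by (metis set_append Un_insert_right sup_bot.right_neutral empty_set list.simps(15))
qed

definition separator :: "'a set \<Rightarrow> 'a set set \<Rightarrow> 'a set \<Rightarrow> bool" where
  "separator E \<B> A \<longleftrightarrow> A \<subseteq> E \<and> (\<exists>k. \<forall>B\<in>\<B>. card (A \<inter> B) = k)"

lemma separator_card_eq:
  "separator E \<B> A \<Longrightarrow> B \<in> \<B> \<Longrightarrow> B' \<in> \<B> \<Longrightarrow> card (A \<inter> B) = card (A \<inter> B')"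
  unfolding separator_def by metis

lemma separator_exchange:
  assumes m: "matroid E \<B>" and A: "separator E \<B> A"
    and B: "B \<in> \<B>" "insert y (B - {x}) \<in> \<B>" and x: "x \<in> A \<inter> B" and y: "y \<notin> B"
  shows "y \<in> A"
proof (rule ccontr)
  assume "y \<notin> A"
  then have "A \<inter> insert y (B - {x}) = A \<inter> B - {x}"
    by auto
  moreover have "card (A \<inter> B - {x}) < card (A \<inter> B)"
    using x matroid_finite_basis[OF m B(1)] by (intro psubset_card_mono) auto
  ultimately have "card (A \<inter> insert y (B - {x})) < card (A \<inter> B)"
    by simp
  then show False
    using separator_card_eq[OF A B(2) B(1)] by simp
qed

lemma separator_complement:
  assumes m: "matroid E \<B>" and A: "separator E \<B> A"
  shows "separator E \<B> (E - A)"
proof -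
  obtain B0 where B0: "B0 \<in> \<B>"
    using matroid_bases_nonempty[OF m] by blast
  have "card ((E - A) \<inter> B) = card B0 - card (A \<inter> B0)" if "B \<in> \<B>" for B
  proof -
    have "(E - A) \<inter> B = B - A \<inter> B"
      using matroid_basis_subset[OF m that] by blast
    then show ?thesis
      using matroid_finite_basis[OF m that] bases_card_eq[OF m that B0]
        separator_card_eq[OF A that B0] by (simp add: card_Diff_subset)
  qed
  then show ?thesis
    unfolding separator_def by blast
qed

lemma matroid_restrict_separator:
  assumes m: "matroid E \<B>" and A: "separator E \<B> A"
  shows "matroid A ((\<lambda>B. A \<inter> B) ` \<B>)"
  unfolding matroid_def
proof (intro conjI ballI)
  show "finite A"
    using A matroid_finite[OF m] finite_subset unfolding separator_def by blast
  show "(\<lambda>B. A \<inter> B) ` \<B> \<noteq> {}"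
    using matroid_bases_nonempty[OF m] by simp
next
  fix X assume "X \<in> (\<lambda>B. A \<inter> B) ` \<B>"
  then show "X \<subseteq> A"
    by blast
next
  fix X1 X2 x assume "X1 \<in> (\<lambda>B. A \<inter> B) ` \<B>" "X2 \<in> (\<lambda>B. A \<inter> B) ` \<B>" and x: "x \<in> X1 - X2"
  then obtain B1 B2 where B: "B1 \<in> \<B>" "B2 \<in> \<B>" "X1 = A \<inter> B1" "X2 = A \<inter> B2"
    by blast
  obtain y where y: "y \<in> B2 - B1" and B1': "insert y (B1 - {x}) \<in> \<B>"
    using matroid_exchange[OF m B(1,2)] x B(3,4) by blast
  have "y \<in> A"
    using separator_exchange[OF m A B(1) B1'] x y B(3) by blast
  then have "insert y (X1 - {x}) = A \<inter> insert y (B1 - {x})" "y \<in> X2 - X1"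
    using y B(3,4) by auto
  then show "\<exists>y\<in>X2 - X1. insert y (X1 - {x}) \<in> (\<lambda>B. A \<inter> B) ` \<B>"
    using B1' by blast
qed

lemma separator_mix_bases:
  assumes m: "matroid E \<B>" and A: "separator E \<B> A" and B: "B \<in> \<B>" "B' \<in> \<B>"
  shows "(A \<inter> B) \<union> (B' - A) \<in> \<B>"
  using B(2)
proof (induction "card (A \<inter> B' - B)" arbitrary: B' rule: less_induct)
  case less
  show ?case
  proof (cases "A \<inter> B' \<subseteq> B")
    case True
    then have "A \<inter> B' = A \<inter> B"
      using separator_card_eq[OF A less.prems B(1)] matroid_finite_basis[OF m B(1)]
      by (metis Int_subset_iff card_subset_eq finite_Int inf.cobounded1)
    then have "(A \<inter> B) \<union> (B' - A) = B'"
      by blast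
    then show ?thesis
      using less.prems by simp
  next
    case False
    then obtain x where x: "x \<in> A \<inter> B' - B"
      by blast
    obtain y where y: "y \<in> B - B'" and B'': "insert y (B' - {x}) \<in> \<B>"
      using matroid_exchange[OF m less.prems B(1)] x by blast
    have "y \<in> A"
      using separator_exchange[OF m A less.prems B''] x y by blast
    then have "insert y (B' - {x}) - A = B' - A" "A \<inter> insert y (B' - {x}) - B = A \<inter> B' - B - {x}"
      using x y by auto
    moreover have "card (A \<inter> B' - B - {x}) < card (A \<inter> B' - B)"
      using x matroid_finite_basis[OF m less.prems] by (intro psubset_card_mono) auto
    ultimately show ?thesis
      using less.hyps[OF _ B''] by simp
  qed
qed

lemma direct_sum_separator:
  assumes m: "matroid E \<B>" and A: "separator E \<B> A"
  shows "is_direct_sum E \<B> A ((\<lambda>B. A \<inter> B) ` \<B>) (E - A) ((\<lambda>B. (E - A) \<inter> B) ` \<B>)"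
proof -
  have "\<B> = {X \<union> Y | X Y. X \<in> (\<lambda>B. A \<inter> B) ` \<B> \<and> Y \<in> (\<lambda>B. (E - A) \<inter> B) ` \<B>}"
  proof (intro set_eqI iffI)
    fix B assume "B \<in> \<B>"
    moreover have "B = (A \<inter> B) \<union> ((E - A) \<inter> B)"
      using matroid_basis_subset[OF m \<open>B \<in> \<B>\<close>] by blast
    ultimately show "B \<in> {X \<union> Y | X Y. X \<in> (\<lambda>B. A \<inter> B) ` \<B> \<and> Y \<in> (\<lambda>B. (E - A) \<inter> B) ` \<B>}"
      by blast
  next
    fix B assume "B \<in> {X \<union> Y | X Y. X \<in> (\<lambda>B. A \<inter> B) ` \<B> \<and> Y \<in> (\<lambda>B. (E - A) \<inter> B) ` \<B>}"
    then obtain B1 B2 where B: "B1 \<in> \<B>" "B2 \<in> \<B>" "B = (A \<inter> B1) \<union> ((E - A) \<inter> B2)"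
      by blast
    moreover have "(E - A) \<inter> B2 = B2 - A"
      using matroid_basis_subset[OF m B(2)] by blast
    ultimately show "B \<in> \<B>"
      using separator_mix_bases[OF m A] by simp
  qed
  moreover have "A \<subseteq> E"
    using A by (simp add: separator_def)
  moreover have "matroid A ((\<lambda>B. A \<inter> B) ` \<B>)" "matroid (E - A) ((\<lambda>B. (E - A) \<inter> B) ` \<B>)"
    using matroid_restrict_separator[OF m] A separator_complement[OF m A] by blast+
  ultimately show ?thesis
    unfolding is_direct_sum_def by blast
qed

lemma Union_choices_Un:
  assumes "C1 \<inter> C2 = {}"
  shows "{\<Union> (f ` (C1 \<union> C2)) | f. \<forall>c\<in>C1 \<union> C2. f c \<in> F c} =
    {X \<union> Y | X Y. X \<in> {\<Union> (f ` C1) | f. \<forall>c\<in>C1. f c \<in> F c} \<and> Y \<in> {\<Union> (f ` C2) | f. \<forall>c\<in>C2. f c \<in> F c}}"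
proof (intro set_eqI iffI)
  fix X assume "X \<in> {\<Union> (f ` (C1 \<union> C2)) | f. \<forall>c\<in>C1 \<union> C2. f c \<in> F c}"
  then obtain f where "X = \<Union> (f ` C1) \<union> \<Union> (f ` C2)" "\<forall>c\<in>C1 \<union> C2. f c \<in> F c"
    by auto
  then show "X \<in> {X \<union> Y | X Y. X \<in> {\<Union> (f ` C1) | f. \<forall>c\<in>C1. f c \<in> F c} \<and> Y \<in> {\<Union> (f ` C2) | f. \<forall>c\<in>C2. f c \<in> F c}}"
    by blast
next
  fix X assume "X \<in> {X \<union> Y | X Y. X \<in> {\<Union> (f ` C1) | f. \<forall>c\<in>C1. f c \<in> F c} \<and> Y \<in> {\<Union> (f ` C2) | f. \<forall>c\<in>C2. f c \<in> F c}}"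
  then obtain f g where fg: "X = \<Union> (f ` C1) \<union> \<Union> (g ` C2)" "\<forall>c\<in>C1. f c \<in> F c" "\<forall>c\<in>C2. g c \<in> F c"
    by blast
  define h where "h c = (if c \<in> C1 then f c else g c)" for c
  have "X = \<Union> (h ` (C1 \<union> C2))"
    using fg(1) assms by (auto simp: h_def)
  moreover have "\<forall>c\<in>C1 \<union> C2. h c \<in> F c"
    using fg(2,3) by (auto simp: h_def)
  ultimately show "X \<in> {\<Union> (f ` (C1 \<union> C2)) | f. \<forall>c\<in>C1 \<union> C2. f c \<in> F c}"
    by blast
qed

lemma component_decomposition_direct_sum:
  assumes ds: "is_direct_sum E \<B> S \<B>1 T \<B>2"
    and C1: "component_decomposition S \<B>1 C1" and C2: "component_decomposition T \<B>2 C2"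
  shows "component_decomposition E \<B> (C1 \<union> C2)"
proof -
  have ST: "S \<inter> T = {}" "S \<union> T = E" "\<B> = {X \<union> Y | X Y. X \<in> \<B>1 \<and> Y \<in> \<B>2}"
    using ds by (simp_all add: is_direct_sum_def)
  have fin: "finite C1" "finite C2"
    and comps: "\<forall>c\<in>C1 \<union> C2. fst c \<noteq> {} \<and> connected_matroid (fst c) (snd c)"
    and disj1: "\<forall>c\<in>C1. \<forall>d\<in>C1. c \<noteq> d \<longrightarrow> fst c \<inter> fst d = {}"
    and disj2: "\<forall>c\<in>C2. \<forall>d\<in>C2. c \<noteq> d \<longrightarrow> fst c \<inter> fst d = {}"
    and U: "\<Union> (fst ` C1) = S" "\<Union> (fst ` C2) = T"
    and B: "\<B>1 = {\<Union> (f ` C1) | f. \<forall>c\<in>C1. f c \<in> snd c}" "\<B>2 = {\<Union> (f ` C2) | f. \<forall>c\<in>C2. f c \<in> snd c}"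
    using C1 C2 unfolding component_decomposition_def by auto
  have across: "fst c \<inter> fst d = {}" if "c \<in> C1" "d \<in> C2" for c d
    using that U ST(1) by blast
  have "C1 \<inter> C2 = {}"
    using across comps by blast
  then have "\<B> = {\<Union> (f ` (C1 \<union> C2)) | f. \<forall>c\<in>C1 \<union> C2. f c \<in> snd c}"
    unfolding ST(3) B by (rule Union_choices_Un[symmetric])
  moreover have "\<forall>c\<in>C1 \<union> C2. \<forall>d\<in>C1 \<union> C2. c \<noteq> d \<longrightarrow> fst c \<inter> fst d = {}"
    using disj1 disj2 across by (metis Int_commute Un_iff)
  moreover have "\<Union> (fst ` (C1 \<union> C2)) = E"
    using U ST(2) by (simp add: image_Un)
  ultimately show ?thesis
    using fin comps unfolding component_decomposition_def by blast
qed

lemma component_decomposition_exists: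
  "matroid E \<B> \<Longrightarrow> E \<noteq> {} \<Longrightarrow> \<exists>C. component_decomposition E \<B> C"
proof (induction "card E" arbitrary: E \<B> rule: less_induct)
  case less
  show ?case
  proof (cases "connected_matroid E \<B>")
    case True
    have "\<B> = {\<Union> (f ` {(E, \<B>)}) | f. \<forall>c\<in>{(E, \<B>)}. f c \<in> snd c}"
      by (auto intro!: exI[of _ "\<lambda>_. _"])
    then have "component_decomposition E \<B> {(E, \<B>)}"
      using True less.prems(2) by (simp add: component_decomposition_def)
    then show ?thesis
      by blast
  next
    case False
    then obtain S \<B>1 T \<B>2 where ST: "S \<noteq> {}" "T \<noteq> {}" and ds: "is_direct_sum E \<B> S \<B>1 T \<B>2"
      using less.prems(1) unfolding connected_matroid_def by blast
    then have "matroid S \<B>1" "matroid T \<B>2" "S \<subset> E" "T \<subset> E"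
      unfolding is_direct_sum_def by auto
    moreover have "finite E"
      using matroid_finite[OF less.prems(1)] .
    ultimately obtain C1 C2 where "component_decomposition S \<B>1 C1" "component_decomposition T \<B>2 C2"
      using less.hyps ST by (meson psubset_card_mono)
    then show ?thesis
      using component_decomposition_direct_sum[OF ds] by blast
  qed
qed

lemma union_of_components_if_separator:
  assumes m: "matroid E \<B>" and A: "separator E \<B> A" "A \<noteq> {}"
  shows "union_of_components E \<B> A"
proof (cases "A = E")
  case True
  then obtain C where "component_decomposition E \<B> C"
    using component_decomposition_exists[OF m] A(2) by blast
  then show ?thesis
    unfolding union_of_components_def component_decomposition_def using True by blast
next
  case False
  have ds: "is_direct_sum E \<B> A ((\<lambda>B. A \<inter> B) ` \<B>) (E - A) ((\<lambda>B. (E - A) \<inter> B) ` \<B>)"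
    using direct_sum_separator[OF m A(1)] .
  moreover have "E - A \<noteq> {}"
    using False A(1) unfolding separator_def by blast
  ultimately obtain C1 C2 where C1: "component_decomposition A ((\<lambda>B. A \<inter> B) ` \<B>) C1"
    and C2: "component_decomposition (E - A) ((\<lambda>B. (E - A) \<inter> B) ` \<B>) C2"
    using component_decomposition_exists A(2) unfolding is_direct_sum_def by metis
  have "component_decomposition E \<B> (C1 \<union> C2)"
    using component_decomposition_direct_sum[OF ds C1 C2] .
  moreover have "A = \<Union> (fst ` C1)"
    using C1 by (simp add: component_decomposition_def)
  ultimately show ?thesis
    unfolding union_of_components_def by blast
qed

lemma card_inter_Union_components:
  assumes C: "component_decomposition E \<B> C" and D: "D \<subseteq> C" and f: "\<forall>c\<in>C. f c \<in> snd c"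
  shows "card (\<Union> (fst ` D) \<inter> \<Union> (f ` C)) = (\<Sum>c\<in>D. card (f c))"
proof -
  have mc: "\<And>c. c \<in> C \<Longrightarrow> matroid (fst c) (snd c)"
    using C unfolding component_decomposition_def connected_matroid_def by blast
  have disj: "\<And>c d. c \<in> C \<Longrightarrow> d \<in> C \<Longrightarrow> c \<noteq> d \<Longrightarrow> fst c \<inter> fst d = {}"
    using C unfolding component_decomposition_def by blast
  have sub: "\<And>c. c \<in> C \<Longrightarrow> f c \<subseteq> fst c"
    using f mc matroid_basis_subset by blast
  have "\<Union> (fst ` D) \<inter> \<Union> (f ` C) = \<Union> (f ` D)"
  proof (intro equalityI subsetI)
    fix x assume "x \<in> \<Union> (fst ` D) \<inter> \<Union> (f ` C)"
    then obtain c d where "c \<in> C" "x \<in> f c" "d \<in> D" "x \<in> fst d"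
      by blast
    then have "c = d"
      using sub disj D by blast
    then show "x \<in> \<Union> (f ` D)"
      using \<open>x \<in> f c\<close> \<open>d \<in> D\<close> by blast
  next
    fix x assume "x \<in> \<Union> (f ` D)"
    then show "x \<in> \<Union> (fst ` D) \<inter> \<Union> (f ` C)"
      using D sub by blast
  qed
  moreover have "card (\<Union> (f ` D)) = (\<Sum>c\<in>D. card (f c))"
  proof (rule card_UN_disjoint)
    show "finite D"
      using C D finite_subset unfolding component_decomposition_def by blast
    show "\<forall>c\<in>D. finite (f c)"
      using D f mc matroid_finite_basis by blast
    show "\<forall>c\<in>D. \<forall>d\<in>D. c \<noteq> d \<longrightarrow> f c \<inter> f d = {}"
      using D sub disj by (meson disjoint_iff subsetD)
  qed
  ultimately show ?thesis
    by simp
qed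

lemma separator_if_union_of_components:
  assumes "union_of_components E \<B> A"
  shows "separator E \<B> A"
proof -
  obtain C D where C: "component_decomposition E \<B> C" and D: "D \<subseteq> C" "A = \<Union> (fst ` D)"
    using assms unfolding union_of_components_def by blast
  have mc: "\<And>c. c \<in> C \<Longrightarrow> matroid (fst c) (snd c)"
    using C unfolding component_decomposition_def connected_matroid_def by blast
  have "\<forall>c\<in>C. \<exists>B. B \<in> snd c"
    using mc matroid_bases_nonempty by blast
  then obtain g where g: "\<And>c. c \<in> C \<Longrightarrow> g c \<in> snd c"
    using bchoice by metis
  have "card (A \<inter> \<Union> (f ` C)) = (\<Sum>c\<in>D. card (g c))" if f: "\<forall>c\<in>C. f c \<in> snd c" for f
    unfolding D(2) card_inter_Union_components[OF C D(1) f]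
    using D(1) f g mc bases_card_eq by (intro sum.cong) blast+
  then have "\<forall>B\<in>\<B>. card (A \<inter> B) = (\<Sum>c\<in>D. card (g c))"
    using C unfolding component_decomposition_def by auto
  moreover have "A \<subseteq> E"
    using C D unfolding component_decomposition_def by blast
  ultimately show ?thesis
    unfolding separator_def by blast
qed

lemma sum_by_parts:
  "(\<Sum>i<n. a i * z i) = (\<Sum>k<n. (a k - a (Suc k)) * (\<Sum>i<Suc k. z i)) + a n * (\<Sum>i<n. z i :: real)"
  by (induction n) (simp_all add: algebra_simps)

lemma sum_nth_eq_sum_set_take:
  assumes "distinct xs" "k \<le> length xs"
  shows "(\<Sum>i<k. f (xs ! i)) = (\<Sum>x\<in>set (take k xs). f x)"
proof -
  have "bij_betw ((!) (take k xs)) {..<k} (set (take k xs))"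
    using assms by (intro bij_betw_nth) auto
  then have "(\<Sum>x\<in>set (take k xs). f x) = (\<Sum>i<k. f (take k xs ! i))"
    by (rule sum.reindex_bij_betw[symmetric])
  then show ?thesis
    by simp
qed

lemma sum_mult_eq_sum_prefix_sums:
  fixes w f :: "'a \<Rightarrow> real"
  assumes "distinct es"
  defines "a \<equiv> \<lambda>k. if k < length es then w (es ! k) else 0"
  shows "(\<Sum>i\<in>set es. w i * f i) = (\<Sum>k<length es. (a k - a (Suc k)) * (\<Sum>i\<in>set (take (Suc k) es). f i))"
proof -
  let ?n = "length es"
  have "(\<Sum>i\<in>set es. w i * f i) = (\<Sum>k<?n. a k * f (es ! k))"
    using sum_nth_eq_sum_set_take[OF assms(1), of ?n "\<lambda>i. w i * f i"] by (simp add: a_def)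
  also have "\<dots> = (\<Sum>k<?n. (a k - a (Suc k)) * (\<Sum>i<Suc k. f (es ! i))) + a ?n * (\<Sum>i<?n. f (es ! i))"
    by (rule sum_by_parts)
  also have "\<dots> = (\<Sum>k<?n. (a k - a (Suc k)) * (\<Sum>i<Suc k. f (es ! i)))"
    by (simp add: a_def)
  also have "\<dots> = (\<Sum>k<?n. (a k - a (Suc k)) * (\<Sum>i\<in>set (take (Suc k) es). f i))"
  proof (rule sum.cong)
    fix k assume "k \<in> {..<?n}"
    then have "(\<Sum>i<Suc k. f (es ! i)) = (\<Sum>i\<in>set (take (Suc k) es). f i)"
      using sum_nth_eq_sum_set_take[OF assms(1), of "Suc k" f] by (simp del: sum.lessThan_Suc)
    then show "(a k - a (Suc k)) * (\<Sum>i<Suc k. f (es ! i)) = (a k - a (Suc k)) * (\<Sum>i\<in>set (take (Suc k) es). f i)"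
      by simp
  qed simp
  finally show ?thesis .
qed

text \<open>Order E by decreasing weight. Both sides are then combinations of prefix sums with
  nonnegative coefficients, except for the last prefix E, on which the two prefix sums agree;
  and the greedy basis attains the rank on every prefix.\<close>
lemma greedy_weight_bound:
  fixes w z :: "'a \<Rightarrow> real"
  assumes m: "matroid E \<B>"
    and rank_bound: "\<And>A. A \<subseteq> E \<Longrightarrow> (\<Sum>i\<in>A. z i) \<le> mrank \<B> A"
    and total: "(\<Sum>i\<in>E. z i) = mrank \<B> E"
  shows "\<exists>B\<in>\<B>. (\<Sum>i\<in>E. w i * z i) \<le> (\<Sum>i\<in>B. w i)"
proof -
  obtain xs where xs: "set xs = E" "distinct xs"
    using finite_distinct_list[OF matroid_finite[OF m]] by blast
  define es where "es = sort_key (\<lambda>i. - w i) xs"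
  have es: "set es = E" "distinct es" "sorted (map (\<lambda>i. - w i) es)"
    unfolding es_def using xs by (simp_all add: sorted_sort_key)
  define n where "n = length es"
  define a where "a k = (if k < n then w (es ! k) else 0)" for k
  define T where "T k = set (take (Suc k) es)" for k
  have parts: "(\<Sum>i\<in>E. w i * f i) = (\<Sum>k<n. (a k - a (Suc k)) * (\<Sum>i\<in>T k. f i))" for f
    using sum_mult_eq_sum_prefix_sums[OF es(2), of w f] es(1) by (simp add: a_def n_def T_def)
  obtain B where B: "B \<in> \<B>" "\<And>j. card (set (take j es) \<inter> B) = mrank \<B> (set (take j es))"
    using basis_attaining_prefix_ranks[OF m] by blast
  have "(\<Sum>i\<in>E. w i * z i) \<le> (\<Sum>i\<in>E. w i * of_bool (i \<in> B))"
    unfolding parts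
  proof (rule sum_mono)
    fix k assume "k \<in> {..<n}"
    have indicator_sum: "(\<Sum>i\<in>T k. of_bool (i \<in> B)) = real (mrank \<B> (T k))"
      using B(2) by (simp add: T_def Int_def)
    show "(a k - a (Suc k)) * (\<Sum>i\<in>T k. z i) \<le> (a k - a (Suc k)) * (\<Sum>i\<in>T k. of_bool (i \<in> B))"
    proof (cases "Suc k < n")
      case True
      have "a (Suc k) \<le> a k"
        using sorted_nth_mono[OF es(3), of k "Suc k"] True by (simp add: a_def n_def)
      moreover have "(\<Sum>i\<in>T k. z i) \<le> mrank \<B> (T k)"
        using rank_bound es(1) set_take_subset by (metis T_def)
      ultimately show ?thesis
        using indicator_sum by (simp add: mult_left_mono)
    next
      case False
      then have "T k = E"
        using \<open>k \<in> {..<n}\<close> es(1) by (simp add: T_def n_def)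
      then show ?thesis
        using indicator_sum total by simp
    qed
  qed
  also have "\<dots> = (\<Sum>i\<in>B. w i)"
    using matroid_basis_subset[OF m B(1)] matroid_finite[OF m] by (simp add: Int_absorb1)
  finally show ?thesis
    using B(1) by blast
qed

definition incidence_vector :: "'e::finite set \<Rightarrow> real^'e" where
  "incidence_vector B = (\<chi> i. of_bool (i \<in> B))"

lemma incidence_vector_nth [simp]: "incidence_vector B $ i = of_bool (i \<in> B)"
  by (simp add: incidence_vector_def)

lemma base_polytope_eq: "base_polytope \<B> = convex hull (incidence_vector ` \<B>)"
  by (simp add: base_polytope_def incidence_vector_def of_bool_def)

lemma in_base_polytope_if_rank_bounds:
  fixes z :: "real^'e::finite"
  assumes m: "matroid UNIV \<B>"
    and rank_bound: "\<And>A. (\<Sum>i\<in>A. z $ i) \<le> mrank \<B> A"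
    and total: "(\<Sum>i\<in>UNIV. z $ i) = mrank \<B> UNIV"
  shows "z \<in> base_polytope \<B>"
proof (rule ccontr)
  assume "z \<notin> base_polytope \<B>"
  moreover have "closed (base_polytope \<B>)" "convex (base_polytope \<B>)"
    using matroid_finite_bases[OF m]
    by (simp_all add: base_polytope_eq compact_imp_closed finite_imp_compact_convex_hull)
  ultimately obtain a b where ab: "inner a z < b" "\<forall>x\<in>base_polytope \<B>. inner a x > b"
    using separating_hyperplane_closed_point by blast
  obtain B where B: "B \<in> \<B>" "(\<Sum>i\<in>UNIV. - a $ i * z $ i) \<le> (\<Sum>i\<in>B. - a $ i)"
    using greedy_weight_bound[OF m, of "\<lambda>i. z $ i" "\<lambda>i. - a $ i"] rank_bound total by blast
  have "incidence_vector B \<in> base_polytope \<B>"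
    using B(1) by (simp add: base_polytope_eq hull_inc)
  then have "b < inner a (incidence_vector B)"
    using ab(2) by blast
  also have "inner a (incidence_vector B) = (\<Sum>i\<in>B. a $ i)"
    by (simp add: inner_vec_def)
  finally have "b < (\<Sum>i\<in>B. a $ i)" .
  moreover have "inner a z = (\<Sum>i\<in>UNIV. a $ i * z $ i)"
    by (simp add: inner_vec_def)
  ultimately show False
    using ab(1) B(2) by (simp add: sum_negf)
qed

lemma rel_interior_convex_hull_image:
  fixes f :: "'b \<Rightarrow> 'a::euclidean_space"
  assumes "finite I"
  shows "rel_interior (convex hull (f ` I)) = {\<Sum>i\<in>I. c i *\<^sub>R f i | c. (\<forall>i\<in>I. 0 < c i) \<and> sum c I = 1}"
proof -
  have "rel_interior (convex hull (\<Union>i\<in>I. {f i})) =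
      {\<Sum>i\<in>I. c i *\<^sub>R s i | c s. (\<forall>i\<in>I. 0 < c i) \<and> sum c I = 1 \<and> (\<forall>i\<in>I. s i \<in> rel_interior {f i})}"
    using assms by (intro rel_interior_convex_hull_union) auto
  moreover have "(\<Sum>i\<in>I. c i *\<^sub>R s i) = (\<Sum>i\<in>I. c i *\<^sub>R f i)" if "\<forall>i\<in>I. s i \<in> rel_interior {f i}" for c s
    using that by (intro sum.cong) auto
  moreover have "(\<Union>i\<in>I. {f i}) = f ` I"
    by blast
  ultimately show ?thesis
    by auto
qed

lemma rel_interior_convex_hull_if_extendable:
  fixes S :: "'a::euclidean_space set"
  assumes "finite S" "S \<noteq> {}"
    and extend: "\<And>v. v \<in> S \<Longrightarrow> \<exists>e>1. (1 - e) *\<^sub>R v + e *\<^sub>R z \<in> convex hull S"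
  shows "z \<in> rel_interior (convex hull S)"
proof -
  obtain E where E: "\<And>v. v \<in> S \<Longrightarrow> 1 < E v \<and> (1 - E v) *\<^sub>R v + E v *\<^sub>R z \<in> convex hull S"
    using extend by metis
  define e where "e = Min (E ` S)"
  have e: "1 < e" "\<And>v. v \<in> S \<Longrightarrow> e \<le> E v"
    using assms(1,2) E by (auto simp: e_def)
  define push where "push x = (1 - e) *\<^sub>R x + e *\<^sub>R z" for x
  have push_vertex: "push v \<in> convex hull S" if v: "v \<in> S" for v
  proof -
    let ?p = "(1 - E v) *\<^sub>R v + E v *\<^sub>R z"
    have "E v > 0"
      using E[OF v] by simp
    then have "push v = (1 - e / E v) *\<^sub>R v + (e / E v) *\<^sub>R ?p"
      by (simp add: push_def algebra_simps)
    moreover have "0 \<le> e / E v" "e / E v \<le> 1"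
      using e(1) e(2)[OF v] \<open>E v > 0\<close> by simp_all
    ultimately show ?thesis
      using E[OF v] hull_inc[OF v] convexD[OF convex_convex_hull] by (metis diff_add_cancel diff_ge_0_iff_ge)
  qed
  have "convex {x. push x \<in> convex hull S}"
  proof (rule convexI)
    fix x y :: 'a and u v :: real
    assume "x \<in> {x. push x \<in> convex hull S}" "y \<in> {x. push x \<in> convex hull S}"
      and uv: "0 \<le> u" "0 \<le> v" "u + v = 1"
    moreover have "u *\<^sub>R push x + v *\<^sub>R push y = (1 - e) *\<^sub>R (u *\<^sub>R x + v *\<^sub>R y) + (u + v) *\<^sub>R (e *\<^sub>R z)"
      by (simp add: push_def algebra_simps)
    then have "push (u *\<^sub>R x + v *\<^sub>R y) = u *\<^sub>R push x + v *\<^sub>R push y"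
      using uv(3) by (simp add: push_def)
    ultimately show "u *\<^sub>R x + v *\<^sub>R y \<in> {x. push x \<in> convex hull S}"
      using convexD[OF convex_convex_hull] by simp
  qed
  then have "convex hull S \<subseteq> {x. push x \<in> convex hull S}"
    using push_vertex by (intro hull_minimal) auto
  then show ?thesis
    using convex_rel_interior_iff[of "convex hull S" z] assms(2) e(1)
    by (auto simp: push_def)
qed

lemma incidence_combination_nth:
  fixes \<B> :: "'e::finite set set"
  assumes "finite \<B>"
  shows "(\<Sum>B\<in>\<B>. w B *\<^sub>R incidence_vector B) $ i = (\<Sum>B\<in>{B\<in>\<B>. i \<in> B}. w B)"
  using assms by (simp add: Collect_conj_eq Int_commute)

lemma rel_interior_base_polytope_iff:
  fixes \<B> :: "'e::finite set set"
  assumes "finite \<B>"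
  shows "x \<in> rel_interior (base_polytope \<B>) \<longleftrightarrow>
    (\<exists>w. (\<forall>B\<in>\<B>. 0 < w B) \<and> sum w \<B> = 1 \<and> (\<forall>i. (\<Sum>B\<in>{B\<in>\<B>. i \<in> B}. w B) = x $ i))"
proof -
  have "x \<in> rel_interior (base_polytope \<B>) \<longleftrightarrow>
      (\<exists>w. (\<forall>B\<in>\<B>. 0 < w B) \<and> sum w \<B> = 1 \<and> (\<Sum>B\<in>\<B>. w B *\<^sub>R incidence_vector B) = x)"
    using assms by (auto simp: base_polytope_eq rel_interior_convex_hull_image)
  then show ?thesis
    by (simp only: vec_eq_iff incidence_combination_nth[OF assms])
qed

lemma sum_marginals:
  assumes "finite \<B>" "finite A"
  shows "(\<Sum>e\<in>A. \<Sum>B\<in>{B\<in>\<B>. e \<in> B}. \<mu> B) = (\<Sum>B\<in>\<B>. real (card (A \<inter> B)) * \<mu> B)"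
proof -
  have "(\<Sum>e\<in>A. \<Sum>B\<in>{B\<in>\<B>. e \<in> B}. \<mu> B) = (\<Sum>e\<in>A. \<Sum>B\<in>\<B>. of_bool (e \<in> B) * \<mu> B)"
    using assms(1) by (simp add: Collect_conj_eq Int_commute)
  also have "\<dots> = (\<Sum>B\<in>\<B>. \<Sum>e\<in>A. of_bool (e \<in> B) * \<mu> B)"
    by (rule sum.swap)
  also have "\<dots> = (\<Sum>B\<in>\<B>. real (card (A \<inter> B)) * \<mu> B)"
    using assms(2) by (simp add: sum_distrib_right[symmetric] Int_def)
  finally show ?thesis .
qed

lemma weighted_card_inter_le_mrank:
  fixes \<mu> :: "'a set \<Rightarrow> real"
  assumes m: "matroid E \<B>" and nonneg: "\<forall>B\<in>\<B>. 0 \<le> \<mu> B"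
  shows "(\<Sum>B\<in>\<B>. card (A \<inter> B) * \<mu> B) \<le> mrank \<B> A * sum \<mu> \<B>"
  using nonneg card_inter_le_mrank[OF m]
  by (simp add: sum_distrib_left sum_mono mult_right_mono)

lemma weighted_card_inter_eq_mrank_iff:
  fixes \<mu> :: "'a set \<Rightarrow> real"
  assumes m: "matroid E \<B>" and pos: "\<forall>B\<in>\<B>. 0 < \<mu> B"
  shows "(\<Sum>B\<in>\<B>. card (A \<inter> B) * \<mu> B) = mrank \<B> A * sum \<mu> \<B> \<longleftrightarrow>
    (\<forall>B\<in>\<B>. card (A \<inter> B) = mrank \<B> A)"
proof
  assume eq: "(\<Sum>B\<in>\<B>. card (A \<inter> B) * \<mu> B) = mrank \<B> A * sum \<mu> \<B>"
  show "\<forall>B\<in>\<B>. card (A \<inter> B) = mrank \<B> A"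
  proof (rule ccontr)
    assume "\<not> (\<forall>B\<in>\<B>. card (A \<inter> B) = mrank \<B> A)"
    then obtain B0 where "B0 \<in> \<B>" "card (A \<inter> B0) < mrank \<B> A"
      using card_inter_le_mrank[OF m] le_neq_implies_less by blast
    then have "(\<Sum>B\<in>\<B>. card (A \<inter> B) * \<mu> B) < (\<Sum>B\<in>\<B>. mrank \<B> A * \<mu> B)"
      using pos card_inter_le_mrank[OF m] matroid_finite_bases[OF m]
      by (intro sum_strict_mono_ex1) (auto intro: mult_right_mono)
    then show False
      using eq by (simp add: sum_distrib_left)
  qed
qed (simp add: sum_distrib_left)

definition strictly_uniformly_dense :: "'a set set \<Rightarrow> bool" where
  "strictly_uniformly_dense \<B> \<longleftrightarrow> (\<forall>A. A \<noteq> {} \<longrightarrow> density \<B> A \<le> density \<B> UNIV \<and>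
     (\<not> union_of_components UNIV \<B> A \<longrightarrow> density \<B> A < density \<B> UNIV))"

context
  fixes \<B> :: "'e::finite set set"
  assumes m: "matroid UNIV \<B>" and loopless: "loopless UNIV \<B>"
begin

lemma mrank_pos: "A \<noteq> {} \<Longrightarrow> 0 < mrank \<B> A"
proof -
  assume "A \<noteq> {}"
  then obtain e B where "e \<in> A" "B \<in> \<B>" "e \<in> B"
    using loopless unfolding loopless_def by blast
  then have "0 < card (A \<inter> B)"
    using matroid_finite_basis[OF m] card_gt_0_iff by blast
  then show ?thesis
    using card_inter_le_mrank[OF m \<open>B \<in> \<B>\<close>, of A] by linarith
qed

lemma card_basis_eq_mrank:
  assumes "B \<in> \<B>"
  shows "card B = mrank \<B> UNIV"
proof -
  obtain B' where "B' \<in> \<B>" "card (UNIV \<inter> B') = mrank \<B> UNIV"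
    using mrank_attained[OF m] by blast
  then show ?thesis
    using bases_card_eq[OF m assms] by simp
qed

lemma density_le_density_UNIV_iff:
  assumes "A \<noteq> {}"
  shows "density \<B> A \<le> density \<B> UNIV \<longleftrightarrow>
    real (card A) * mrank \<B> UNIV \<le> real CARD('e) * mrank \<B> A"
  using mrank_pos[OF assms] mrank_pos[of UNIV] by (simp add: density_def field_simps)

lemma density_less_density_UNIV_iff:
  assumes "A \<noteq> {}"
  shows "density \<B> A < density \<B> UNIV \<longleftrightarrow>
    real (card A) * mrank \<B> UNIV < real CARD('e) * mrank \<B> A"
  using mrank_pos[OF assms] mrank_pos[of UNIV] by (simp add: density_def field_simps)

lemma constant_marginal_total:
  fixes \<mu> :: "'e set \<Rightarrow> real" and c :: real
  assumes "\<forall>e. (\<Sum>B\<in>{B\<in>\<B>. e \<in> B}. \<mu> B) = c"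
  shows "CARD('e) * c = mrank \<B> UNIV * sum \<mu> \<B>"
proof -
  have "CARD('e) * c = (\<Sum>e\<in>UNIV. \<Sum>B\<in>{B\<in>\<B>. e \<in> B}. \<mu> B)"
    using assms by simp
  also have "\<dots> = (\<Sum>B\<in>\<B>. real (card (UNIV \<inter> B)) * \<mu> B)"
    using matroid_finite_bases[OF m] by (simp add: sum_marginals)
  also have "\<dots> = mrank \<B> UNIV * sum \<mu> \<B>"
    using card_basis_eq_mrank by (simp add: sum_distrib_left)
  finally show ?thesis .
qed

lemma rel_interior_iff_uniform_measure:
  "(\<chi> e. inverse (density \<B> UNIV)) \<in> rel_interior (base_polytope \<B>) \<longleftrightarrow>
    (\<exists>\<mu> :: 'e set \<Rightarrow> real. (\<forall>B\<in>\<B>. \<mu> B > 0) \<and> (\<exists>c. \<forall>e. (\<Sum>B\<in>{B\<in>\<B>. e \<in> B}. \<mu> B) = c))"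
  (is "?x \<in> _ \<longleftrightarrow> _")
proof
  assume "?x \<in> rel_interior (base_polytope \<B>)"
  then obtain w where "\<forall>B\<in>\<B>. 0 < w B" "\<forall>i. (\<Sum>B\<in>{B\<in>\<B>. i \<in> B}. w B) = ?x $ i"
    using rel_interior_base_polytope_iff[OF matroid_finite_bases[OF m]] by blast
  then have "(\<forall>B\<in>\<B>. 0 < w B) \<and> (\<forall>e. (\<Sum>B\<in>{B\<in>\<B>. e \<in> B}. w B) = inverse (density \<B> UNIV))"
    by simp
  then show "\<exists>\<mu> :: 'e set \<Rightarrow> real. (\<forall>B\<in>\<B>. \<mu> B > 0) \<and> (\<exists>c. \<forall>e. (\<Sum>B\<in>{B\<in>\<B>. e \<in> B}. \<mu> B) = c)"
    by blast
next
  assume "\<exists>\<mu> :: 'e set \<Rightarrow> real. (\<forall>B\<in>\<B>. \<mu> B > 0) \<and> (\<exists>c. \<forall>e. (\<Sum>B\<in>{B\<in>\<B>. e \<in> B}. \<mu> B) = c)"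
  then obtain \<mu> :: "'e set \<Rightarrow> real" and c where pos: "\<forall>B\<in>\<B>. \<mu> B > 0" and marg: "\<forall>e. (\<Sum>B\<in>{B\<in>\<B>. e \<in> B}. \<mu> B) = c"
    by blast
  define M where "M = sum \<mu> \<B>"
  have "0 < M"
    unfolding M_def using pos matroid_finite_bases[OF m] matroid_bases_nonempty[OF m]
    by (simp add: sum_pos)
  have "inverse (density \<B> UNIV) = mrank \<B> UNIV / CARD('e)"
    by (simp add: density_def)
  also have "\<dots> = c / M"
    using constant_marginal_total[OF marg] \<open>0 < M\<close> by (simp add: frac_eq_eq M_def mult.commute)
  finally have "\<forall>i. (\<Sum>B\<in>{B\<in>\<B>. i \<in> B}. \<mu> B / M) = ?x $ i"
    using marg by (simp add: sum_divide_distrib[symmetric])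
  moreover have "(\<Sum>B\<in>\<B>. \<mu> B / M) = 1"
    using \<open>0 < M\<close> by (simp add: M_def sum_divide_distrib[symmetric])
  moreover have "\<forall>B\<in>\<B>. 0 < \<mu> B / M"
    using pos \<open>0 < M\<close> by simp
  ultimately have "\<exists>w. (\<forall>B\<in>\<B>. 0 < w B) \<and> sum w \<B> = 1 \<and> (\<forall>i. (\<Sum>B\<in>{B\<in>\<B>. i \<in> B}. w B) = ?x $ i)"
    by (intro exI[of _ "\<lambda>B. \<mu> B / M"]) simp
  then show "?x \<in> rel_interior (base_polytope \<B>)"
    using rel_interior_base_polytope_iff[OF matroid_finite_bases[OF m]] by simp
qed

lemma strictly_uniformly_dense_if_uniform_measure:
  fixes \<mu> :: "'e set \<Rightarrow> real"
  assumes pos: "\<forall>B\<in>\<B>. \<mu> B > 0" and marg: "\<forall>e. (\<Sum>B\<in>{B\<in>\<B>. e \<in> B}. \<mu> B) = c"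
  shows "strictly_uniformly_dense \<B>"
  unfolding strictly_uniformly_dense_def
proof (intro allI impI conjI)
  fix A :: "'e set"
  assume "A \<noteq> {}"
  define M where "M = sum \<mu> \<B>"
  define S where "S = (\<Sum>B\<in>\<B>. real (card (A \<inter> B)) * \<mu> B)"
  have "0 < M"
    unfolding M_def using pos matroid_finite_bases[OF m] matroid_bases_nonempty[OF m]
    by (simp add: sum_pos)
  have scaled: "real (card A) * mrank \<B> UNIV * M = CARD('e) * S"
  proof -
    have "real (card A) * c = S"
      using sum_marginals[OF matroid_finite_bases[OF m], of A \<mu>] marg by (simp add: S_def)
    then show ?thesis
      using constant_marginal_total[OF marg] by (metis M_def mult.assoc mult.left_commute)
  qed
  have "S \<le> mrank \<B> A * M"
    using weighted_card_inter_le_mrank[OF m] pos by (simp add: S_def M_def less_imp_le)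
  then have "real (card A) * mrank \<B> UNIV * M \<le> real CARD('e) * mrank \<B> A * M"
    unfolding scaled by (simp add: mult.assoc)
  then show "density \<B> A \<le> density \<B> UNIV"
    using \<open>0 < M\<close> \<open>A \<noteq> {}\<close> by (simp add: density_le_density_UNIV_iff)
  assume "\<not> union_of_components UNIV \<B> A"
  then have "\<not> (\<forall>B\<in>\<B>. card (A \<inter> B) = mrank \<B> A)"
    using union_of_components_if_separator[OF m _ \<open>A \<noteq> {}\<close>] by (auto simp: separator_def)
  then have "S \<noteq> mrank \<B> A * M"
    using weighted_card_inter_eq_mrank_iff[OF m pos] by (simp add: S_def M_def)
  then have "S < mrank \<B> A * M"
    using \<open>S \<le> mrank \<B> A * M\<close> by simp
  then have "real (card A) * mrank \<B> UNIV * M < real CARD('e) * mrank \<B> A * M"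
    unfolding scaled by (simp add: mult.assoc)
  then show "density \<B> A < density \<B> UNIV"
    using \<open>0 < M\<close> \<open>A \<noteq> {}\<close> by (simp add: density_less_density_UNIV_iff)
qed

lemma rank_bound_union_of_components:
  fixes e :: real
  assumes dense: "strictly_uniformly_dense \<B>" and A: "union_of_components UNIV \<B> A" "A \<noteq> {}"
    and B0: "B0 \<in> \<B>" and e: "0 \<le> e"
  shows "(1 - e) * card (A \<inter> B0) + e * (mrank \<B> UNIV / CARD('e) * card A) \<le> mrank \<B> A"
proof -
  obtain B where "B \<in> \<B>" "card (A \<inter> B) = mrank \<B> A"
    using mrank_attained[OF m] by blast
  then have "card (A \<inter> B0) = mrank \<B> A"
    using separator_card_eq[OF separator_if_union_of_components[OF A(1)] B0] by simp
  moreover have "mrank \<B> UNIV / CARD('e) * card A \<le> mrank \<B> A"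
    using dense A unfolding strictly_uniformly_dense_def by (simp add: density_le_density_UNIV_iff field_simps)
  then have "e * (mrank \<B> UNIV / CARD('e) * card A) \<le> e * mrank \<B> A"
    by (rule mult_left_mono[OF _ e])
  ultimately show ?thesis
    by (simp add: left_diff_distrib)
qed

text \<open>By integrality, the strict density inequality leaves a slack of 1 / |E| in the rank
  inequality.\<close>
lemma rank_bound_not_union_of_components:
  fixes e :: real
  assumes dense: "strictly_uniformly_dense \<B>" and A: "\<not> union_of_components UNIV \<B> A" "A \<noteq> {}"
    and e: "1 \<le> e" "e \<le> 1 + 1 / (real CARD('e) * mrank \<B> UNIV)"
  shows "(1 - e) * card (A \<inter> B0) + e * (mrank \<B> UNIV / CARD('e) * card A) \<le> mrank \<B> A"
proof -
  define r where "r = real (mrank \<B> UNIV)"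
  define n where "n = real CARD('e)"
  define x where "x = r / n * card A"
  have "0 < r" "0 < n"
    using mrank_pos[of UNIV] by (simp_all add: r_def n_def)
  have "real (card A) * r < n * mrank \<B> A"
    using dense A unfolding strictly_uniformly_dense_def by (simp add: density_less_density_UNIV_iff r_def n_def)
  then have "real (card A) * r + 1 \<le> n * mrank \<B> A"
    unfolding r_def n_def by (metis of_nat_mult of_nat_less_iff of_nat_Suc Suc_leI of_nat_le_iff add.commute)
  then have slack: "x \<le> mrank \<B> A - 1 / n"
    using \<open>0 < n\<close> by (simp add: x_def field_simps)
  have "real (card A) \<le> n"
    using card_mono[of UNIV A] by (simp add: n_def)
  then have "x \<le> r / n * n"
    unfolding x_def using \<open>0 < r\<close> \<open>0 < n\<close> by (intro mult_left_mono) auto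
  then have "x \<le> r"
    using \<open>0 < n\<close> by simp
  then have "(e - 1) * x \<le> 1 / (n * r) * r"
    using e \<open>0 < n\<close> \<open>0 < r\<close> by (intro mult_mono) (simp_all add: n_def r_def x_def)
  then have "(e - 1) * x \<le> 1 / n"
    using \<open>0 < r\<close> by simp
  moreover have "e * x = x + (e - 1) * x"
    by (simp add: algebra_simps)
  moreover have "(1 - e) * card (A \<inter> B0) \<le> 0"
    using e(1) by (simp add: mult_nonpos_nonneg)
  ultimately show ?thesis
    using slack by (simp add: x_def r_def n_def)
qed

lemma extension_point_in_base_polytope:
  assumes dense: "strictly_uniformly_dense \<B>" and B0: "B0 \<in> \<B>"
    and e: "1 < e" "e \<le> 1 + 1 / (real CARD('e) * mrank \<B> UNIV)"
  shows "(1 - e) *\<^sub>R incidence_vector B0 + e *\<^sub>R (\<chi> i. inverse (density \<B> UNIV)) \<in> base_polytope \<B>"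
proof (rule in_base_polytope_if_rank_bounds[OF m])
  have coord_sum: "(\<Sum>i\<in>A. ((1 - e) *\<^sub>R incidence_vector B0 + e *\<^sub>R (\<chi> i. inverse (density \<B> UNIV))) $ i)
      = (1 - e) * card (A \<inter> B0) + e * (mrank \<B> UNIV / CARD('e) * card A)" for A :: "'e set"
    by (simp add: sum.distrib sum_distrib_left[symmetric] density_def Int_def)
  show "(\<Sum>i\<in>UNIV. ((1 - e) *\<^sub>R incidence_vector B0 + e *\<^sub>R (\<chi> i. inverse (density \<B> UNIV))) $ i)
      = mrank \<B> UNIV"
    unfolding coord_sum using card_basis_eq_mrank[OF B0] by (simp add: algebra_simps)
  fix A :: "'e set"
  have "(1 - e) * card (A \<inter> B0) + e * (mrank \<B> UNIV / CARD('e) * card A) \<le> mrank \<B> A"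
  proof (cases "A = {}")
    case True
    then show ?thesis
      by (simp add: mrank_empty[OF m])
  next
    case False
    then show ?thesis
      using rank_bound_union_of_components[OF dense _ False B0] rank_bound_not_union_of_components[OF dense _ False] e
      by (cases "union_of_components UNIV \<B> A") simp_all
  qed
  then show "(\<Sum>i\<in>A. ((1 - e) *\<^sub>R incidence_vector B0 + e *\<^sub>R (\<chi> i. inverse (density \<B> UNIV))) $ i)
      \<le> mrank \<B> A"
    unfolding coord_sum .
qed

lemma rel_interior_if_strictly_uniformly_dense:
  assumes "strictly_uniformly_dense \<B>"
  shows "(\<chi> i. inverse (density \<B> UNIV)) \<in> rel_interior (base_polytope \<B>)"
  unfolding base_polytope_eq
proof (rule rel_interior_convex_hull_if_extendable)
  show "finite (incidence_vector ` \<B>)" "incidence_vector ` \<B> \<noteq> {}"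
    using matroid_finite_bases[OF m] matroid_bases_nonempty[OF m] by simp_all
  fix v assume "v \<in> incidence_vector ` \<B>"
  then obtain B0 where B0: "B0 \<in> \<B>" "v = incidence_vector B0"
    by blast
  define e where "e = 1 + 1 / (real CARD('e) * mrank \<B> UNIV)"
  have "1 < e"
    using mrank_pos[of UNIV] by (simp add: e_def)
  moreover have "e \<le> 1 + 1 / (real CARD('e) * mrank \<B> UNIV)"
    by (simp add: e_def)
  ultimately have "(1 - e) *\<^sub>R v + e *\<^sub>R (\<chi> i. inverse (density \<B> UNIV)) \<in> base_polytope \<B>"
    unfolding B0(2) by (rule extension_point_in_base_polytope[OF assms B0(1)])
  then show "\<exists>e>1. (1 - e) *\<^sub>R v + e *\<^sub>R (\<chi> i. inverse (density \<B> UNIV)) \<in> convex hull incidence_vector ` \<B>"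
    using \<open>1 < e\<close> unfolding base_polytope_eq by blast
qed

end

theorem theorem2p10:
  fixes \<B> :: "'e::finite set set"
  assumes "matroid (UNIV :: 'e set) \<B>"
    and "loopless (UNIV :: 'e set) \<B>"
  shows "(((\<chi> e. inverse (density \<B> UNIV)) \<in> rel_interior (base_polytope \<B>))
         = (\<forall>A. A \<noteq> {} \<longrightarrow> density \<B> A \<le> density \<B> UNIV \<and>
                (\<not> union_of_components UNIV \<B> A \<longrightarrow> density \<B> A < density \<B> UNIV)))
       \<and> ( (\<forall>A. A \<noteq> {} \<longrightarrow> density \<B> A \<le> density \<B> UNIV \<and>
                (\<not> union_of_components UNIV \<B> A \<longrightarrow> density \<B> A < density \<B> UNIV))
         = (\<exists>\<mu> :: 'e set \<Rightarrow> real. (\<forall>B\<in>\<B>. \<mu> B > 0) \<and>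
                (\<exists>c. \<forall>e. (\<Sum>B\<in>{B\<in>\<B>. e \<in> B}. \<mu> B) = c)))"
  unfolding strictly_uniformly_dense_def[symmetric]
  using rel_interior_iff_uniform_measure[OF assms]
    strictly_uniformly_dense_if_uniform_measure[OF assms]
    rel_interior_if_strictly_uniformly_dense[OF assms]
  by blast

end
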